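(* Let $\gamma>0$ and let ${}_1R^\gamma$, ${}_2R^\gamma$ be independent Bessel processes of dimension $\gamma$ started at $0$. Put $I_R(t)={}_1R^\gamma({}_2R^\gamma(t))$, $t>0$, and let $q(r,t)$ be its density, i.e. $$q(r,t)=\int_0^\infty p(r,s)\,p(s,t)\,ds,\qquad p(r,t)=\frac{2\,r^{\gamma-1}e^{-r^2/(2t)}}{(2t)^{\gamma/2}\Gamma(\gamma/2)}\quad (r\ge 0,\ t>0).$$ Then for every $t>0$ and every complex $\eta$ with $\Re\{\eta\}>1-\gamma$, $$\int_0^\infty r^{\eta-1}q(r,t)\,dr=E\{I_R(t)\}^{\eta-1}=(2^3t)^{\frac{\eta-1}{4}}\,\frac{\Gamma\left(\frac{\gamma+\eta-1}{2}\right)\Gamma\left(\frac{2\gamma+\eta-1}{4}\right)}{\Gamma^2\left(\frac{\gamma}{2}\right)}.$$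
   Context: A Bessel process $R^\gamma$ of dimension $\gamma>0$ started at $0$ is the diffusion on $[0,\infty)$ with generator $\frac12\left(\frac{\partial^2}{\partial x^2}+\frac{\gamma-1}{x}\frac{\partial}{\partial x}\right)$; its density at time $t>0$ is $p(r,t)$ given in the claim. *)

theory Defs
  imports "HOL-Analysis.Analysis"
begin

definition bessel_density :: "real \<Rightarrow> real \<Rightarrow> real \<Rightarrow> real" where
  "bessel_density \<gamma> r t =
     2 * r powr (\<gamma> - 1) * exp (- (r\<^sup>2) / (2 * t)) / ((2 * t) powr (\<gamma> / 2) * Gamma (\<gamma> / 2))"

definition iterated_bessel_density :: "real \<Rightarrow> real \<Rightarrow> real \<Rightarrow> real" where
  "iterated_bessel_density \<gamma> r t =
     (LBINT s:{0<..}. bessel_density \<gamma> r s * bessel_density \<gamma> s t)"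

end

theory Submission
  imports Defs
begin

text \<open>
  The substitution \<open>u = r\<^sup>2 / (2 s)\<close> turns the Mellin transform of the Bessel density
  \<open>p(\<cdot>, s)\<close> into Euler's Gamma integral, with value
  \<open>(2 s) powr ((\<eta> - 1) / 2) * \<Gamma>((\<gamma> + \<eta> - 1) / 2) / \<Gamma>(\<gamma> / 2)\<close>.
  Exchanging the two integrals in the Mellin transform of \<open>q\<close> (Fubini, justified by the same
  formula at the real exponent \<open>Re \<eta>\<close>) therefore leaves, up to constants, the integral of
  \<open>p(s, t) * s powr ((\<eta> - 1) / 2)\<close>: again a Mellin transform of a Bessel density, now at
  \<open>(\<eta> + 1) / 2\<close>.
\<close>

lemma complex_of_real_powr_eq_exp:
  "x > 0 \<Longrightarrow> complex_of_real x powr z = exp (z * of_real (ln x))"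
  by (simp add: powr_def Ln_of_real)

lemma of_real_powr_double_mult:
  fixes x y :: real and z :: complex
  assumes "x > 0" and "y > 0"
  shows "of_real x powr (2 * z) * of_real y powr z = of_real (x\<^sup>2 * y) powr z"
proof -
  have pos: "x\<^sup>2 * y > 0" using assms by simp
  have "complex_of_real (ln (x\<^sup>2 * y)) = 2 * of_real (ln x) + of_real (ln y)"
    using assms by (simp add: ln_mult power2_eq_square)
  then show ?thesis
    unfolding complex_of_real_powr_eq_exp[OF assms(1)] complex_of_real_powr_eq_exp[OF assms(2)]
      complex_of_real_powr_eq_exp[OF pos]
    by (simp only: algebra_simps flip: exp_add)
qed

lemma complex_set_integrable_of_real_iff:
  "set_integrable M A (\<lambda>x. complex_of_real (f x)) \<longleftrightarrow> set_integrable M A f"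
proof -
  have "(\<lambda>x. indicator A x *\<^sub>R complex_of_real (f x)) = (\<lambda>x. of_real (indicator A x *\<^sub>R f x))"
    by (simp add: scaleR_conv_of_real)
  then show ?thesis
    unfolding set_integrable_def by (simp only: complex_of_real_integrable_eq)
qed

lemma (in pair_sigma_finite) Fubini_set_integral:
  fixes f :: "'a \<Rightarrow> 'b \<Rightarrow> 'c::{banach, second_countable_topology}"
  assumes meas: "set_borel_measurable (M1 \<Otimes>\<^sub>M M2) (A \<times> B) (case_prod f)"
    and inner: "\<And>x. x \<in> A \<Longrightarrow> set_integrable M2 B (f x)"
    and norm_inner: "set_integrable M1 A (\<lambda>x. LINT y:B|M2. norm (f x y))"
  shows "set_integrable M2 B (\<lambda>y. LINT x:A|M1. f x y)
    \<and> (LINT y:B|M2. LINT x:A|M1. f x y) = (LINT x:A|M1. LINT y:B|M2. f x y)"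
proof -
  define g where "g x y = indicator A x *\<^sub>R indicator B y *\<^sub>R f x y" for x y
  have g_meas: "case_prod g \<in> borel_measurable (M1 \<Otimes>\<^sub>M M2)"
    using meas unfolding set_borel_measurable_def g_def
    by (simp add: indicator_times split_beta' mult.commute)
  have "integrable M1 (\<lambda>x. \<integral>y. norm (g x y) \<partial>M2)"
    using norm_inner unfolding set_integrable_def set_lebesgue_integral_def g_def
    by (simp add: abs_mult mult.assoc)
  moreover have "AE x in M1. integrable M2 (g x)"
    using inner unfolding set_integrable_def g_def by (auto simp: indicator_def)
  ultimately have int: "integrable (M1 \<Otimes>\<^sub>M M2) (case_prod g)"
    using Fubini_integrable[OF g_meas] by simp
  have g_fst: "(\<integral>x. g x y \<partial>M1) = indicator B y *\<^sub>R (LINT x:A|M1. f x y)" for y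
    unfolding g_def set_lebesgue_integral_def
    by (simp add: mult.commute flip: integral_scaleR_right)
  have g_snd: "(\<integral>y. g x y \<partial>M2) = indicator A x *\<^sub>R (LINT y:B|M2. f x y)" for x
    unfolding g_def set_lebesgue_integral_def by (simp flip: integral_scaleR_right)
  show ?thesis
    using integrable_snd[OF int] Fubini_integral[OF int]
    unfolding set_integrable_def set_lebesgue_integral_def g_fst g_snd by simp
qed

lemma gaussian_substitution_jacobian:
  fixes a :: complex and c x :: real
  assumes c: "c > 0" and x: "x > 0"
  shows "of_real \<bar>2 * x / c\<bar> * (of_real (x\<^sup>2 / c) powr (a / 2 - 1) / of_real (exp (x\<^sup>2 / c)))
       = 2 * of_real c powr (- a / 2) * (of_real x powr (a - 1) * of_real (exp (- (x\<^sup>2) / c)))"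
proof -
  define lx lc q where "lx = complex_of_real (ln x)" and "lc = complex_of_real (ln c)"
    and "q = complex_of_real (x\<^sup>2 / c)"
  have ln_q: "complex_of_real (ln (x\<^sup>2 / c)) = 2 * lx - lc"
    using x c by (simp add: lx_def lc_def ln_div ln_mult power2_eq_square)
  have x_exp: "complex_of_real x = exp lx" and c_exp: "complex_of_real c = exp lc"
    using x c by (simp_all add: lx_def lc_def exp_of_real)
  have jac: "complex_of_real \<bar>2 * x / c\<bar> = 2 * exp lx / exp lc"
    using x c by (simp flip: x_exp c_exp)
  have pow_q: "of_real (x\<^sup>2 / c) powr (a / 2 - 1) = exp ((a / 2 - 1) * (2 * lx - lc))"
    using x c by (subst complex_of_real_powr_eq_exp) (simp_all only: ln_q, simp)
  have exp_q: "complex_of_real (exp (x\<^sup>2 / c)) = exp q"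
    unfolding q_def exp_of_real ..
  have exp_neg_q: "complex_of_real (exp (- (x\<^sup>2) / c)) = exp (- q)"
    unfolding q_def of_real_minus[symmetric] exp_of_real minus_divide_left ..
  have "of_real \<bar>2 * x / c\<bar> * (of_real (x\<^sup>2 / c) powr (a / 2 - 1) / of_real (exp (x\<^sup>2 / c)))
      = 2 * exp (lx - lc + (a / 2 - 1) * (2 * lx - lc) - q)"
    unfolding jac pow_q exp_q by (simp add: exp_add exp_diff)
  also have "lx - lc + (a / 2 - 1) * (2 * lx - lc) - q = - a / 2 * lc + ((a - 1) * lx + - q)"
    by (simp add: algebra_simps)
  also have "2 * exp \<dots> = 2 * exp (- a / 2 * lc) * (exp ((a - 1) * lx) * exp (- q))"
    by (simp only: exp_add mult.assoc)
  finally show ?thesis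
    using x c by (simp only: complex_of_real_powr_eq_exp lx_def lc_def exp_neg_q)
qed

lemma gaussian_mellin_integral_HK:
  fixes a :: complex and c :: real
  assumes a: "Re a > 0" and c: "c > 0"
  shows "(\<lambda>x. of_real x powr (a - 1) * of_real (exp (- (x\<^sup>2) / c))) absolutely_integrable_on {0<..}
       \<and> integral {0<..} (\<lambda>x. of_real x powr (a - 1) * of_real (exp (- (x\<^sup>2) / c)))
           = of_real c powr (a / 2) * Gamma (a / 2) / 2"
proof -
  define G where "G u = of_real u powr (a / 2 - 1) / of_real (exp u)" for u :: real
  define g g' where "g x = x\<^sup>2 / c" and "g' x = 2 * x / c" for x :: real
  define K where "K = 2 * complex_of_real c powr (- a / 2)"
  have a2: "Re (a / 2) > 0" using a by simp
  have G_int: "G absolutely_integrable_on {0<..}" "integral {0<..} G = Gamma (a / 2)"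
    unfolding G_def using absolutely_integrable_Gamma_integral'[OF a2] Gamma_integral_complex'[OF a2]
    by (simp_all add: integral_unique)
  have der: "(g has_field_derivative g' x) (at x within {0<..})" for x
    unfolding g_def g'_def using c by (auto intro!: derivative_eq_intros)
  have inj: "inj_on g {0<..}"
    unfolding g_def inj_on_def using c by (auto simp: power2_eq_iff_nonneg)
  have img: "g ` {0<..} = {0<..}"
  proof safe
    fix u :: real
    assume "u > 0"
    then have "g (sqrt (c * u)) = u" "sqrt (c * u) > 0"
      unfolding g_def using c by simp_all
    then show "u \<in> g ` {0<..}" by (metis greaterThan_iff image_eqI)
  qed (use c in \<open>auto simp: g_def\<close>)
  have subst: "(\<lambda>x. \<bar>g' x\<bar> *\<^sub>R G (g x)) absolutely_integrable_on {0<..}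
      \<and> integral {0<..} (\<lambda>x. \<bar>g' x\<bar> *\<^sub>R G (g x)) = Gamma (a / 2)"
    using has_absolute_integral_change_of_variables_real[OF _ der inj, of G "Gamma (a / 2)"] G_int img
    by simp
  have eq: "of_real x powr (a - 1) * of_real (exp (- (x\<^sup>2) / c)) = inverse K * (\<bar>g' x\<bar> *\<^sub>R G (g x))"
    if "x \<in> {0<..}" for x
    using gaussian_substitution_jacobian[OF c, of x a] that c
    unfolding K_def g_def g'_def G_def by (simp add: scaleR_conv_of_real field_simps)
  have "(\<lambda>x. of_real x powr (a - 1) * of_real (exp (- (x\<^sup>2) / c))) absolutely_integrable_on {0<..}
      \<and> integral {0<..} (\<lambda>x. of_real x powr (a - 1) * of_real (exp (- (x\<^sup>2) / c)))
        = inverse K * Gamma (a / 2)"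
  proof
    show "(\<lambda>x. of_real x powr (a - 1) * of_real (exp (- (x\<^sup>2) / c))) absolutely_integrable_on {0<..}"
      using set_integrable_mult_right[OF subst[THEN conjunct1], of "inverse K"]
      by (subst set_integrable_cong[OF refl refl eq]) auto
    show "integral {0<..} (\<lambda>x. of_real x powr (a - 1) * of_real (exp (- (x\<^sup>2) / c)))
        = inverse K * Gamma (a / 2)"
      using subst[THEN conjunct2] by (simp only: integral_cong[OF eq] integral_mult_right)
  qed
  then show ?thesis
    unfolding K_def by (simp add: powr_minus field_simps)
qed

lemma gaussian_mellin_transform:
  fixes a :: complex and c :: real
  assumes "Re a > 0" and "c > 0"
  shows "set_integrable lborel {0<..} (\<lambda>x. of_real x powr (a - 1) * of_real (exp (- (x\<^sup>2) / c)))
       \<and> (LBINT x:{0<..}. of_real x powr (a - 1) * of_real (exp (- (x\<^sup>2) / c)))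
           = of_real c powr (a / 2) * Gamma (a / 2) / 2"
proof -
  note HK = gaussian_mellin_integral_HK[OF assms]
  have "set_borel_measurable borel {0<..} (\<lambda>x. of_real x powr (a - 1) * of_real (exp (- (x\<^sup>2) / c)))"
    by (rule set_measurable_continuous_on) (use \<open>c > 0\<close> in \<open>auto intro!: continuous_intros\<close>)
  then have int: "set_integrable lborel {0<..} (\<lambda>x. of_real x powr (a - 1) * of_real (exp (- (x\<^sup>2) / c)))"
    using HK unfolding set_integrable_def set_borel_measurable_def
    by (simp add: integrable_completion)
  show ?thesis
    using int set_borel_integral_eq_integral(2)[OF int] HK by simp
qed

lemma bessel_density_nonneg: "s > 0 \<Longrightarrow> \<gamma> > 0 \<Longrightarrow> bessel_density \<gamma> r s \<ge> 0"
  unfolding bessel_density_def by (auto intro!: divide_nonneg_pos Gamma_real_pos)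

lemma bessel_density_mellin_transform:
  fixes \<gamma> s :: real and b :: complex
  assumes \<gamma>: "\<gamma> > 0" and s: "s > 0" and b: "Re b > 1 - \<gamma>"
  shows "set_integrable lborel {0<..} (\<lambda>r. of_real r powr (b - 1) * of_real (bessel_density \<gamma> r s))
    \<and> (LBINT r:{0<..}. of_real r powr (b - 1) * of_real (bessel_density \<gamma> r s))
      = of_real (2 * s) powr ((b - 1) / 2) * Gamma ((of_real \<gamma> + b - 1) / 2) / of_real (Gamma (\<gamma> / 2))"
proof -
  define a where "a = b + of_real \<gamma> - 1"
  define C where "C = complex_of_real (2 / ((2 * s) powr (\<gamma> / 2) * Gamma (\<gamma> / 2)))"
  have a: "Re a > 0" using b by (simp add: a_def)
  have Gamma_pos: "Gamma (\<gamma> / 2) > 0" using \<gamma> by (simp add: Gamma_real_pos)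
  have eq: "of_real r powr (b - 1) * of_real (bessel_density \<gamma> r s)
      = C * (of_real r powr (a - 1) * of_real (exp (- (r\<^sup>2) / (2 * s))))" if "r \<in> {0<..}" for r
  proof -
    have "complex_of_real (r powr (\<gamma> - 1)) = of_real r powr (of_real \<gamma> - 1)"
      using that powr_of_real[of r "\<gamma> - 1"] by simp
    then have "of_real (bessel_density \<gamma> r s) = C * (of_real r powr (of_real \<gamma> - 1) * of_real (exp (- (r\<^sup>2) / (2 * s))))"
      by (simp add: bessel_density_def C_def)
    moreover have "of_real r powr (b - 1) * of_real r powr (of_real \<gamma> - 1) = of_real r powr (a - 1)"
      by (simp add: a_def algebra_simps flip: powr_add)
    ultimately show ?thesis
      by (simp add: algebra_simps)
  qed
  note gauss = gaussian_mellin_transform[OF a, of "2 * s"]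
  have "a / 2 = (b - 1) / 2 + of_real (\<gamma> / 2)"
    by (simp add: a_def field_simps)
  then have "of_real (2 * s) powr (a / 2) = of_real (2 * s) powr ((b - 1) / 2) * of_real ((2 * s) powr (\<gamma> / 2))"
    using s by (simp only: powr_add powr_of_real less_imp_le)
  moreover have "set_integrable lborel {0<..} (\<lambda>r. of_real r powr (b - 1) * of_real (bessel_density \<gamma> r s))
      = set_integrable lborel {0<..} (\<lambda>r. C * (of_real r powr (a - 1) * of_real (exp (- (r\<^sup>2) / (2 * s)))))"
    by (rule set_integrable_cong) (auto simp: eq)
  moreover have "(LBINT r:{0<..}. of_real r powr (b - 1) * of_real (bessel_density \<gamma> r s))
      = (LBINT r:{0<..}. C * (of_real r powr (a - 1) * of_real (exp (- (r\<^sup>2) / (2 * s)))))"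
    by (rule set_lebesgue_integral_cong) (auto simp: eq)
  ultimately show ?thesis
    using gauss s Gamma_pos by (simp add: C_def a_def field_simps)
qed

lemma bessel_density_mellin_transform_real:
  fixes \<gamma> s \<beta> :: real
  assumes "\<gamma> > 0" and "s > 0" and "\<beta> > 1 - \<gamma>"
  shows "set_integrable lborel {0<..} (\<lambda>r. r powr (\<beta> - 1) * bessel_density \<gamma> r s)
    \<and> (LBINT r:{0<..}. r powr (\<beta> - 1) * bessel_density \<gamma> r s)
      = (2 * s) powr ((\<beta> - 1) / 2) * Gamma ((\<gamma> + \<beta> - 1) / 2) / Gamma (\<gamma> / 2)"
proof -
  have eq: "of_real r powr (of_real \<beta> - 1) * of_real (bessel_density \<gamma> r s)
      = complex_of_real (r powr (\<beta> - 1) * bessel_density \<gamma> r s)" if "r \<in> {0<..}" for r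
    using that powr_of_real[of r "\<beta> - 1"] by simp
  have "Re (of_real \<beta>) > 1 - \<gamma>" using assms by simp
  note complex = bessel_density_mellin_transform[OF assms(1,2) this]
  have int: "set_integrable lborel {0<..} (\<lambda>r. complex_of_real (r powr (\<beta> - 1) * bessel_density \<gamma> r s))"
    using complex by (subst set_integrable_cong[OF refl refl eq, symmetric]) auto
  have "complex_of_real (LBINT r:{0<..}. r powr (\<beta> - 1) * bessel_density \<gamma> r s)
      = (LBINT r:{0<..}. of_real r powr (of_real \<beta> - 1) * of_real (bessel_density \<gamma> r s))"
    by (simp add: set_lebesgue_integral_cong eq flip: set_integral_complex_of_real)
  also have "\<dots> = of_real ((2 * s) powr ((\<beta> - 1) / 2) * Gamma ((\<gamma> + \<beta> - 1) / 2) / Gamma (\<gamma> / 2))"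
    using complex \<open>s > 0\<close> powr_of_real[of "2 * s" "(\<beta> - 1) / 2"]
      Gamma_complex_of_real[of "(\<gamma> + \<beta> - 1) / 2"] by simp
  finally show ?thesis
    using int by (simp only: complex_set_integrable_of_real_iff of_real_eq_iff)
qed

lemma set_integrable_bessel_density_times_mellin:
  fixes \<gamma> t \<alpha> :: real
  assumes \<gamma>: "\<gamma> > 0" and t: "t > 0" and \<alpha>: "\<alpha> > 1 - \<gamma>"
  shows "set_integrable lborel {0<..}
    (\<lambda>s. bessel_density \<gamma> s t * (LBINT r:{0<..}. r powr (\<alpha> - 1) * bessel_density \<gamma> r s))"
proof -
  define C where "C = 2 powr ((\<alpha> - 1) / 2) * Gamma ((\<gamma> + \<alpha> - 1) / 2) / Gamma (\<gamma> / 2)"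
  have "bessel_density \<gamma> s t * (LBINT r:{0<..}. r powr (\<alpha> - 1) * bessel_density \<gamma> r s)
      = C * (s powr ((\<alpha> + 1) / 2 - 1) * bessel_density \<gamma> s t)" if "s \<in> {0<..}" for s
  proof -
    have "(\<alpha> + 1) / 2 - 1 = (\<alpha> - 1) / 2" by (simp add: field_simps)
    then show ?thesis
      using bessel_density_mellin_transform_real[OF \<gamma> _ \<alpha>, of s] that
      by (simp add: C_def powr_mult)
  qed
  moreover have "set_integrable lborel {0<..} (\<lambda>s. C * (s powr ((\<alpha> + 1) / 2 - 1) * bessel_density \<gamma> s t))"
    using bessel_density_mellin_transform_real[OF \<gamma> t, of "(\<alpha> + 1) / 2"] \<alpha> \<gamma> by simp
  ultimately show ?thesis
    by (subst set_integrable_cong[OF refl refl]) auto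
qed

lemma mellin_iterated_bessel_density_Fubini:
  fixes \<gamma> t :: real and \<eta> :: complex
  assumes \<gamma>: "\<gamma> > 0" and t: "t > 0" and \<eta>: "Re \<eta> > 1 - \<gamma>"
  shows "set_integrable lborel {0<..}
      (\<lambda>r. of_real r powr (\<eta> - 1) * of_real (iterated_bessel_density \<gamma> r t))
    \<and> (LBINT r:{0<..}. of_real r powr (\<eta> - 1) * of_real (iterated_bessel_density \<gamma> r t))
      = (LBINT s:{0<..}. of_real (bessel_density \<gamma> s t)
          * (LBINT r:{0<..}. of_real r powr (\<eta> - 1) * of_real (bessel_density \<gamma> r s)))"
proof -
  define f where "f s r = of_real r powr (\<eta> - 1) * of_real (bessel_density \<gamma> r s * bessel_density \<gamma> s t)"
    for s r :: real
  have Gamma_pos: "Gamma (\<gamma> / 2) > 0" using \<gamma> by (simp add: Gamma_real_pos)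
  have "continuous_on ({0<..} \<times> {0<..}) (\<lambda>x. f (fst x) (snd x))"
    unfolding f_def bessel_density_def using t Gamma_pos by (intro continuous_intros) auto
  then have meas: "set_borel_measurable (lborel \<Otimes>\<^sub>M lborel) ({0<..} \<times> {0<..}) (case_prod f)"
    unfolding lborel_prod case_prod_beta' set_borel_measurable_def
    by (simp add: borel_measurable_continuous_on_indicator borel_open open_Times)
  have f_fst: "f s = (\<lambda>r. of_real (bessel_density \<gamma> s t) * (of_real r powr (\<eta> - 1) * of_real (bessel_density \<gamma> r s)))"
    for s
    by (auto simp: f_def)
  have inner: "set_integrable lborel {0<..} (f s)" if "s \<in> {0<..}" for s
    unfolding f_fst using bessel_density_mellin_transform[OF \<gamma> _ \<eta>] that
    by (auto intro: set_integrable_mult_right)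
  have norm_f: "norm (f s r) = bessel_density \<gamma> s t * (r powr (Re \<eta> - 1) * bessel_density \<gamma> r s)"
    if "s > 0" "r > 0" for s r
    using that \<gamma> t by (simp add: f_def norm_mult norm_powr_real_powr bessel_density_nonneg)
  have "(LBINT r:{0<..}. norm (f s r))
      = bessel_density \<gamma> s t * (LBINT r:{0<..}. r powr (Re \<eta> - 1) * bessel_density \<gamma> r s)"
    if "s \<in> {0<..}" for s
    using that by (simp add: norm_f set_lebesgue_integral_cong flip: set_integral_mult_right)
  then have "set_integrable lborel {0<..} (\<lambda>s. LBINT r:{0<..}. norm (f s r))"
    using set_integrable_bessel_density_times_mellin[OF \<gamma> t \<eta>]
    by (subst set_integrable_cong[OF refl refl]) auto
  note Fubini = lborel_pair.Fubini_set_integral[OF meas inner this]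
  have f_snd: "(LBINT s:{0<..}. f s r) = of_real r powr (\<eta> - 1) * of_real (iterated_bessel_density \<gamma> r t)"
    for r
    by (simp add: f_def iterated_bessel_density_def flip: set_integral_complex_of_real)
  show ?thesis
    using Fubini unfolding f_snd by (simp add: f_fst)
qed

lemma set_integral_bessel_density_times_mellin:
  fixes \<gamma> t :: real and \<eta> :: complex
  assumes \<gamma>: "\<gamma> > 0" and t: "t > 0" and \<eta>: "Re \<eta> > 1 - \<gamma>"
  shows "(LBINT s:{0<..}. of_real (bessel_density \<gamma> s t)
          * (LBINT r:{0<..}. of_real r powr (\<eta> - 1) * of_real (bessel_density \<gamma> r s)))
    = of_real (2^3 * t) powr ((\<eta> - 1) / 4)
      * Gamma ((of_real \<gamma> + \<eta> - 1) / 2) * Gamma ((2 * of_real \<gamma> + \<eta> - 1) / 4)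
      / of_real ((Gamma (\<gamma> / 2))\<^sup>2)"
proof -
  define b where "b = (\<eta> + 1) / 2"
  define D where "D = of_real 2 powr ((\<eta> - 1) / 2) * Gamma ((of_real \<gamma> + \<eta> - 1) / 2) / of_real (Gamma (\<gamma> / 2))"
  have b: "Re b > 1 - \<gamma>" "b - 1 = (\<eta> - 1) / 2" using \<eta> \<gamma> by (simp_all add: b_def field_simps)
  have "of_real (bessel_density \<gamma> s t)
          * (LBINT r:{0<..}. of_real r powr (\<eta> - 1) * of_real (bessel_density \<gamma> r s))
      = D * (of_real s powr (b - 1) * of_real (bessel_density \<gamma> s t))" if "s \<in> {0<..}" for s
  proof -
    have "complex_of_real (2 * s) powr ((\<eta> - 1) / 2) = of_real 2 powr ((\<eta> - 1) / 2) * of_real s powr ((\<eta> - 1) / 2)"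
      using that by (simp only: of_real_mult) (rule powr_times_real, auto)
    then show ?thesis
      using bessel_density_mellin_transform[OF \<gamma> _ \<eta>, of s] that by (simp add: D_def b)
  qed
  then have "(LBINT s:{0<..}. of_real (bessel_density \<gamma> s t)
          * (LBINT r:{0<..}. of_real r powr (\<eta> - 1) * of_real (bessel_density \<gamma> r s)))
      = (LBINT s:{0<..}. D * (of_real s powr (b - 1) * of_real (bessel_density \<gamma> s t)))"
    by (intro set_lebesgue_integral_cong) auto
  also have "\<dots> = D * (of_real (2 * t) powr ((b - 1) / 2) * Gamma ((of_real \<gamma> + b - 1) / 2)
      / of_real (Gamma (\<gamma> / 2)))"
    using bessel_density_mellin_transform[OF \<gamma> t b(1)] by simp
  also have "\<dots> = of_real (2^3 * t) powr ((\<eta> - 1) / 4)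
      * Gamma ((of_real \<gamma> + \<eta> - 1) / 2) * Gamma ((2 * of_real \<gamma> + \<eta> - 1) / 4)
      / of_real ((Gamma (\<gamma> / 2))\<^sup>2)"
  proof -
    have "(b - 1) / 2 = (\<eta> - 1) / 4" "(of_real \<gamma> + b - 1) / 2 = (2 * of_real \<gamma> + \<eta> - 1) / 4"
      "2 * ((\<eta> - 1) / 4) = (\<eta> - 1) / 2" "(2::real)\<^sup>2 * (2 * t) = 2^3 * t"
      by (simp_all add: b_def field_simps)
    then show ?thesis
      using of_real_powr_double_mult[of 2 "2 * t" "(\<eta> - 1) / 4"] t
      unfolding D_def by (simp only:) (simp add: field_simps power2_eq_square)
  qed
  finally show ?thesis .
qed

theorem mainTheorem1:
  fixes \<gamma> t :: real and \<eta> :: complex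
  assumes "\<gamma> > 0" and "t > 0" and "Re \<eta> > 1 - \<gamma>"
  shows "set_integrable lborel {0<..}
           (\<lambda>r::real. of_real r powr (\<eta> - 1) * of_real (iterated_bessel_density \<gamma> r t))
       \<and> (LBINT r:{0<..}. of_real r powr (\<eta> - 1) * of_real (iterated_bessel_density \<gamma> r t))
         = of_real (2^3 * t) powr ((\<eta> - 1) / 4)
           * Gamma ((of_real \<gamma> + \<eta> - 1) / 2) * Gamma ((2 * of_real \<gamma> + \<eta> - 1) / 4)
           / of_real ((Gamma (\<gamma> / 2))\<^sup>2)"
  using mellin_iterated_bessel_density_Fubini[OF assms]
    set_integral_bessel_density_times_mellin[OF assms]
  by simp

end
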